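(* Let $A\in\mathbb{R}^{m\times m}$ be positive definite, let $B\in\mathbb{R}^{m\times n}$ ($n\le m$) be rank deficient, and let $\alpha\ge0$, $\beta>0$. Then $\operatorname{index}(I-\mathcal{T}(\alpha,\beta))=1$, i.e. $\operatorname{rank}(I-\mathcal{T}(\alpha,\beta))=\operatorname{rank}\big((I-\mathcal{T}(\alpha,\beta))^2\big)$.
   Context: A real square matrix $A$ is called positive definite if $x^TAx>0$ for all nonzero $x\in\mathbb{R}^m$ ($A$ need not be symmetric). For $\alpha\ge0,\beta>0$ define $\mathcal{P}_{MGSSP}=\begin{pmatrix}\alpha I+2A & 2B\\ -2B^T & \beta I\end{pmatrix}$, $\mathcal{Q}_{MGSSP}=\begin{pmatrix}\alpha I+A & B\\ -B^T & \beta I\end{pmatrix}$, and the MGSSP iteration matrix $\mathcal{T}(\alpha,\beta)=\mathcal{P}_{MGSSP}^{-1}\mathcal{Q}_{MGSSP}$ ($\mathcal{P}_{MGSSP}$ is nonsingular). The index of a square matrix $M$ is the smallest $k\ge0$ with $\operatorname{rank}(M^{k})=\operatorname{rank}(M^{k+1})$. *)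

theory Defs
  imports "HOL-Analysis.Analysis"
begin

definition pos_def_mat :: "real^'m^'m \<Rightarrow> bool" where
  "pos_def_mat A \<longleftrightarrow> (\<forall>x::real^'m. x \<noteq> 0 \<longrightarrow> x \<bullet> (A *v x) > 0)"

definition block_mat ::
  "real^'m^'m \<Rightarrow> real^'n^'m \<Rightarrow> real^'m^'n \<Rightarrow> real^'n^'n \<Rightarrow> real^('m + 'n)^('m + 'n)" where
  "block_mat M11 M12 M21 M22 = (\<chi> i j. case i of
      Inl a \<Rightarrow> (case j of Inl b \<Rightarrow> M11 $ a $ b | Inr b \<Rightarrow> M12 $ a $ b)
    | Inr a \<Rightarrow> (case j of Inl b \<Rightarrow> M21 $ a $ b | Inr b \<Rightarrow> M22 $ a $ b))"

definition P_MGSSP :: "real \<Rightarrow> real \<Rightarrow> real^'m^'m \<Rightarrow> real^'n^'m \<Rightarrow> real^('m + 'n)^('m + 'n)" where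
  "P_MGSSP \<alpha> \<beta> A B = block_mat (\<alpha> *\<^sub>R mat 1 + 2 *\<^sub>R A) (2 *\<^sub>R B) (- (2 *\<^sub>R transpose B)) (\<beta> *\<^sub>R mat 1)"

definition Q_MGSSP :: "real \<Rightarrow> real \<Rightarrow> real^'m^'m \<Rightarrow> real^'n^'m \<Rightarrow> real^('m + 'n)^('m + 'n)" where
  "Q_MGSSP \<alpha> \<beta> A B = block_mat (\<alpha> *\<^sub>R mat 1 + A) B (- transpose B) (\<beta> *\<^sub>R mat 1)"

definition T_MGSSP :: "real \<Rightarrow> real \<Rightarrow> real^'m^'m \<Rightarrow> real^'n^'m \<Rightarrow> real^('m + 'n)^('m + 'n)" where
  "T_MGSSP \<alpha> \<beta> A B = matrix_inv (P_MGSSP \<alpha> \<beta> A B) ** Q_MGSSP \<alpha> \<beta> A B"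

text \<open>Matrix powers (the componentwise times on vec types is not matrix product).\<close>
fun mat_pow :: "real^'k^'k \<Rightarrow> nat \<Rightarrow> real^'k^'k" where
  "mat_pow M 0 = mat 1"
| "mat_pow M (Suc k) = M ** mat_pow M k"

definition mat_index :: "real^'k^'k \<Rightarrow> nat" where
  "mat_index M = (LEAST k. rank (mat_pow M k) = rank (mat_pow M (Suc k)))"

end

theory Submission
  imports Defs
begin

text \<open>
  Write \<open>v = (v\<^sub>1, v\<^sub>2)\<close> and \<open>K = P - Q\<close>, the saddle point matrix with blocks
  \<open>A, B, -B\<^sup>T, 0\<close>, so that \<open>I - T = P\<^sup>-\<^sup>1 K\<close>. The quadratic forms of both \<open>P\<close> and \<open>K\<close>
  see nothing of the skew off-diagonal blocks: \<open>v\<^sup>T K v = v\<^sub>1\<^sup>T A v\<^sub>1\<close>, and \<open>v\<^sup>T P v\<close> is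
  positive definite. Hence \<open>K w = 0\<close> forces \<open>w\<^sub>1 = 0\<close> and \<open>B w\<^sub>2 = 0\<close>. If
  \<open>(I - T)\<^sup>2 v = 0\<close>, then \<open>w = (I - T) v\<close> satisfies \<open>K w = 0\<close> and \<open>P w = K v\<close>, so
  \<open>w\<^sup>T P w = w\<^sup>T K v = -(B w\<^sub>2)\<^sup>T v\<^sub>1 = 0\<close> and \<open>w = 0\<close>: the kernels of \<open>I - T\<close> and of its
  square coincide, i.e. the ranks agree. Index 0 is excluded because a nonzero \<open>z\<close>
  with \<open>B z = 0\<close> gives the kernel vector \<open>(0, z)\<close> of \<open>K\<close>, hence of \<open>I - T\<close>.
\<close>

definition vec_inl :: "'a^('m::finite + 'n::finite) \<Rightarrow> 'a^'m" where
  "vec_inl v = (\<chi> i. v $ Inl i)"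

definition vec_inr :: "'a^('m::finite + 'n::finite) \<Rightarrow> 'a^'n" where
  "vec_inr v = (\<chi> j. v $ Inr j)"

definition vec_join :: "'a^'m::finite \<Rightarrow> 'a^'n::finite \<Rightarrow> 'a^('m + 'n)" where
  "vec_join x y = (\<chi> k. case k of Inl i \<Rightarrow> x $ i | Inr j \<Rightarrow> y $ j)"

lemma vec_inl_join [simp]: "vec_inl (vec_join x y) = x"
  and vec_inr_join [simp]: "vec_inr (vec_join x y) = y"
  by (simp_all add: vec_eq_iff vec_inl_def vec_inr_def vec_join_def)

lemma vec_inl_zero [simp]: "vec_inl 0 = 0"
  and vec_inr_zero [simp]: "vec_inr 0 = 0"
  by (simp_all add: vec_eq_iff vec_inl_def vec_inr_def)

lemma vec_eq_0_iff_inl_inr: "v = 0 \<longleftrightarrow> vec_inl v = 0 \<and> vec_inr v = 0"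
  by (simp add: vec_eq_iff vec_inl_def vec_inr_def) (metis sum.exhaust)

lemma sum_UNIV_Plus:
  "(\<Sum>k\<in>UNIV. f k) = (\<Sum>i\<in>UNIV. f (Inl i)) + (\<Sum>j\<in>UNIV. f (Inr j))"
  for f :: "'a::finite + 'b::finite \<Rightarrow> 'c::comm_monoid_add"
  using sum.Plus[of "UNIV :: 'a set" "UNIV :: 'b set" f] by (simp add: o_def)

lemma inner_vec_inl_inr:
  "(u :: real^('m::finite + 'n::finite)) \<bullet> v = vec_inl u \<bullet> vec_inl v + vec_inr u \<bullet> vec_inr v"
  by (simp add: inner_vec_def vec_inl_def vec_inr_def sum_UNIV_Plus)

lemma vec_inl_block_mat_mult:
  "vec_inl (block_mat M11 M12 M21 M22 *v v) = M11 *v vec_inl v + M12 *v vec_inr v"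
  and vec_inr_block_mat_mult:
  "vec_inr (block_mat M11 M12 M21 M22 *v v) = M21 *v vec_inl v + M22 *v vec_inr v"
  by (simp_all add: vec_eq_iff vec_inl_def vec_inr_def block_mat_def
      matrix_vector_mult_def sum_UNIV_Plus)

lemma block_mat_diff:
  "block_mat M11 M12 M21 M22 - block_mat N11 N12 N21 N22
     = block_mat (M11 - N11) (M12 - N12) (M21 - N21) (M22 - N22)"
  by (simp add: vec_eq_iff block_mat_def split: sum.split)

lemma inner_block_mat_mult:
  "w \<bullet> (block_mat M11 M12 M21 M22 *v v)
     = vec_inl w \<bullet> (M11 *v vec_inl v + M12 *v vec_inr v)
       + vec_inr w \<bullet> (M21 *v vec_inl v + M22 *v vec_inr v)"
  by (simp add: inner_vec_inl_inr vec_inl_block_mat_mult vec_inr_block_mat_mult)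

lemma neg_matrix_vector_mult: "(- M) *v x = - (M *v x)" for M :: "'a::ring_1^'n^'m"
  by (simp add: vec_eq_iff matrix_vector_mult_def sum_negf)

lemma inner_skew_block_mat_mult:
  "w \<bullet> (block_mat M11 B (- transpose B) M22 *v v)
     = vec_inl w \<bullet> (M11 *v vec_inl v + B *v vec_inr v) - (B *v vec_inr w) \<bullet> vec_inl v
       + vec_inr w \<bullet> (M22 *v vec_inr v)"
proof -
  have "vec_inr w \<bullet> (- transpose B *v vec_inl v) = - ((B *v vec_inr w) \<bullet> vec_inl v)"
    using dot_lmul_matrix[of "vec_inl v" B "vec_inr w"]
    by (simp add: neg_matrix_vector_mult inner_commute)
  then show ?thesis
    by (simp add: inner_block_mat_mult inner_add_right)
qed

lemma quadratic_form_skew_block_mat: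
  "v \<bullet> (block_mat M11 B (- transpose B) M22 *v v)
     = vec_inl v \<bullet> (M11 *v vec_inl v) + vec_inr v \<bullet> (M22 *v vec_inr v)"
  by (simp add: inner_skew_block_mat_mult inner_add_right inner_commute[of "vec_inl v"])

lemma pos_def_mat_invertible:
  assumes "pos_def_mat M"
  shows "invertible M"
proof -
  have "\<forall>x. M *v x = 0 \<longrightarrow> x = 0"
    using assms unfolding pos_def_mat_def by force
  then show ?thesis
    by (simp add: invertible_left_inverse matrix_left_invertible_ker)
qed

lemma matrix_inv_left:
  fixes P :: "'a::field^'k^'k"
  assumes "invertible P"
  shows "matrix_inv P ** P = mat 1"
  using someI_ex[OF assms[unfolded invertible_def]] by (simp add: matrix_inv_def)

lemma matrix_inv_right:
  fixes P :: "'a::field^'k^'k"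
  assumes "invertible P"
  shows "P ** matrix_inv P = mat 1"
  using someI_ex[OF assms[unfolded invertible_def]] by (simp add: matrix_inv_def)

lemma invertible_matrix_inv:
  fixes P :: "'a::field^'k^'k"
  assumes "invertible P"
  shows "invertible (matrix_inv P)"
  using matrix_inv_left[OF assms] invertible_right_inverse by blast

lemma mat_1_minus_inv_mult_apply:
  fixes P Q :: "real^'k^'k"
  assumes "invertible P"
  shows "(mat 1 - matrix_inv P ** Q) *v v = matrix_inv P *v ((P - Q) *v v)"
proof -
  have "matrix_inv P *v ((P - Q) *v v) = matrix_inv P *v (P *v v) - matrix_inv P *v (Q *v v)"
    by (simp add: matrix_vector_mult_diff_rdistrib matrix_vector_mult_diff_distrib)
  also have "\<dots> = (mat 1 - matrix_inv P ** Q) *v v"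
    by (simp add: matrix_vector_mul_assoc matrix_inv_left[OF assms] matrix_vector_mult_diff_rdistrib)
  finally show ?thesis ..
qed

lemma mat_1_minus_inv_mult_eq_0_iff:
  fixes P Q :: "real^'k^'k"
  assumes "invertible P"
  shows "(mat 1 - matrix_inv P ** Q) *v v = 0 \<longleftrightarrow> (P - Q) *v v = 0"
proof -
  have "inj ((*v) (matrix_inv P))"
    by (rule inj_matrix_vector_mult[OF invertible_matrix_inv[OF assms]])
  then show ?thesis
    unfolding mat_1_minus_inv_mult_apply[OF assms]
    by (metis inj_eq matrix_vector_mult_0_right)
qed

lemma rank_mult_self_eq:
  fixes M :: "real^'k^'k"
  assumes ker: "\<And>v. M *v (M *v v) = 0 \<Longrightarrow> M *v v = 0"
  shows "rank (M ** M) = rank M"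
proof -
  have range_square: "range ((*v) (M ** M)) = (*v) M ` range ((*v) M)"
    by (auto simp: matrix_vector_mul_assoc[symmetric] image_comp o_def)
  have "subspace (range ((*v) M))"
    by (rule linear_subspace_image[OF matrix_vector_mul_linear subspace_UNIV])
  then have span_range: "span (range ((*v) M)) = range ((*v) M)"
    by (rule span_eq_iff[THEN iffD2])
  have "inj_on ((*v) M) (range ((*v) M))"
  proof (rule inj_onI)
    fix a b assume "a \<in> range ((*v) M)" "b \<in> range ((*v) M)" and "M *v a = M *v b"
    then obtain x y where "a - b = M *v (x - y)" "M *v (M *v (x - y)) = 0"
      by (auto simp: matrix_vector_mult_diff_distrib)
    then show "a = b" using ker by force
  qed
  then have "dim ((*v) M ` range ((*v) M)) = dim (range ((*v) M))"
    using dim_image_eq[OF matrix_vector_mul_linear] span_range by metis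
  then show ?thesis
    by (simp add: rank_dim_range range_square)
qed

lemma mat_index_eq_1I:
  fixes M :: "real^'k^'k"
  assumes "M *v z = 0" and "z \<noteq> 0"
    and ker: "\<And>v. M *v (M *v v) = 0 \<Longrightarrow> M *v v = 0"
  shows "mat_index M = 1"
  unfolding mat_index_def
proof (rule Least_equality)
  show "rank (mat_pow M 1) = rank (mat_pow M (Suc 1))"
    using rank_mult_self_eq[OF ker] by (simp add: numeral_2_eq_2)
  have "rank M \<noteq> CARD('k)"
    using assms(1,2) matrix_nonfull_linear_equations_eq by blast
  then show "1 \<le> k" if "rank (mat_pow M k) = rank (mat_pow M (Suc k))" for k
    using that rank_I[where 'n='k] by (cases k) auto
qed

definition saddle_mat :: "real^'m^'m \<Rightarrow> real^'n^'m \<Rightarrow> real^('m + 'n)^('m + 'n)" where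
  "saddle_mat A B = block_mat A B (- transpose B) 0"

lemma P_MGSSP_minus_Q_MGSSP: "P_MGSSP \<alpha> \<beta> A B - Q_MGSSP \<alpha> \<beta> A B = saddle_mat A B"
  by (simp add: P_MGSSP_def Q_MGSSP_def saddle_mat_def block_mat_diff scaleR_2)

lemma saddle_mat_mult_eq_0D:
  assumes "pos_def_mat A" and "saddle_mat A B *v v = 0"
  shows "vec_inl v = 0" and "B *v vec_inr v = 0"
proof -
  have "vec_inl v \<bullet> (A *v vec_inl v) = 0"
    using quadratic_form_skew_block_mat[of v A B 0] assms(2) by (simp add: saddle_mat_def)
  then show inl: "vec_inl v = 0"
    using assms(1) unfolding pos_def_mat_def by force
  have "vec_inl (saddle_mat A B *v v) = 0"
    using assms(2) by simp
  then show "B *v vec_inr v = 0"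
    by (simp add: saddle_mat_def vec_inl_block_mat_mult inl)
qed

lemma pos_def_P_MGSSP:
  fixes A :: "real^'m^'m" and B :: "real^'n^'m"
  assumes "pos_def_mat A" and "\<alpha> \<ge> 0" and "\<beta> > 0"
  shows "pos_def_mat (P_MGSSP \<alpha> \<beta> A B)"
  unfolding pos_def_mat_def
proof (intro allI impI)
  fix v :: "real^('m + 'n)" assume "v \<noteq> 0"
  have quadratic_form: "v \<bullet> (P_MGSSP \<alpha> \<beta> A B *v v)
      = \<alpha> * (vec_inl v \<bullet> vec_inl v) + 2 * (vec_inl v \<bullet> (A *v vec_inl v))
        + \<beta> * (vec_inr v \<bullet> vec_inr v)"
    using quadratic_form_skew_block_mat[of v "\<alpha> *\<^sub>R mat 1 + 2 *\<^sub>R A" "2 *\<^sub>R B" "\<beta> *\<^sub>R mat 1"]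
    by (simp add: P_MGSSP_def transpose_scalar matrix_vector_mult_add_rdistrib
        scaleR_matrix_vector_assoc[symmetric] inner_add_right)
  show "v \<bullet> (P_MGSSP \<alpha> \<beta> A B *v v) > 0"
  proof (cases "vec_inl v = 0")
    case True
    then have "vec_inr v \<noteq> 0"
      using \<open>v \<noteq> 0\<close> vec_eq_0_iff_inl_inr by blast
    then show ?thesis
      using True assms(3) by (simp add: quadratic_form)
  next
    case False
    then have "vec_inl v \<bullet> (A *v vec_inl v) > 0"
      using assms(1) unfolding pos_def_mat_def by blast
    then show ?thesis
      using assms(2,3) by (simp add: quadratic_form add_nonneg_pos add_pos_nonneg)
  qed
qed

context
  fixes A :: "real^'m^'m" and B :: "real^'n^'m" and \<alpha> \<beta> :: real
  assumes pos_def_A: "pos_def_mat A" and \<alpha>_nonneg: "\<alpha> \<ge> 0" and \<beta>_pos: "\<beta> > 0"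
begin

lemma invertible_P_MGSSP: "invertible (P_MGSSP \<alpha> \<beta> A B)"
  by (rule pos_def_mat_invertible[OF pos_def_P_MGSSP[OF pos_def_A \<alpha>_nonneg \<beta>_pos, of B]])

lemma mat_1_minus_T_MGSSP_eq_0_iff:
  "(mat 1 - T_MGSSP \<alpha> \<beta> A B) *v v = 0 \<longleftrightarrow> saddle_mat A B *v v = 0"
  unfolding T_MGSSP_def mat_1_minus_inv_mult_eq_0_iff[OF invertible_P_MGSSP]
  by (simp add: P_MGSSP_minus_Q_MGSSP)

lemma mat_1_minus_T_MGSSP_square_eq_0D:
  assumes "(mat 1 - T_MGSSP \<alpha> \<beta> A B) *v ((mat 1 - T_MGSSP \<alpha> \<beta> A B) *v v) = 0"
  shows "(mat 1 - T_MGSSP \<alpha> \<beta> A B) *v v = 0"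
proof -
  let ?P = "P_MGSSP \<alpha> \<beta> A B"
  define w where "w = (mat 1 - T_MGSSP \<alpha> \<beta> A B) *v v"
  have "saddle_mat A B *v w = 0"
    using assms mat_1_minus_T_MGSSP_eq_0_iff unfolding w_def by blast
  then have w_inl: "vec_inl w = 0" and w_inr: "B *v vec_inr w = 0"
    using saddle_mat_mult_eq_0D[OF pos_def_A] by blast+
  have "?P *v w = saddle_mat A B *v v"
    unfolding w_def T_MGSSP_def mat_1_minus_inv_mult_apply[OF invertible_P_MGSSP]
    by (simp add: matrix_vector_mul_assoc matrix_mul_assoc P_MGSSP_minus_Q_MGSSP
        matrix_inv_right[OF invertible_P_MGSSP])
  then have "w \<bullet> (?P *v w) = 0"
    by (simp add: saddle_mat_def inner_skew_block_mat_mult w_inl w_inr)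
  then have "w = 0"
    using pos_def_P_MGSSP[OF pos_def_A \<alpha>_nonneg \<beta>_pos, of B] unfolding pos_def_mat_def by force
  then show ?thesis
    unfolding w_def .
qed

end

theorem lemma4p2:
  fixes A :: "real^'m^'m" and B :: "real^'n^'m" and \<alpha> \<beta> :: real
  assumes "pos_def_mat A"
    and "CARD('n) \<le> CARD('m)"
    and "rank B < CARD('n)"
    and "\<alpha> \<ge> 0" and "\<beta> > 0"
  shows "mat_index (mat 1 - T_MGSSP \<alpha> \<beta> A B) = 1"
proof -
  obtain z where "z \<noteq> 0" "B *v z = 0"
    using matrix_nonfull_linear_equations_eq[of B] assms(3) by auto
  then have "saddle_mat A B *v vec_join 0 z = 0" and "vec_join 0 z \<noteq> 0"
    by (simp_all add: vec_eq_0_iff_inl_inr saddle_mat_def vec_inl_block_mat_mult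
        vec_inr_block_mat_mult)
  then show ?thesis
    using mat_index_eq_1I mat_1_minus_T_MGSSP_eq_0_iff[OF assms(1,4,5)]
      mat_1_minus_T_MGSSP_square_eq_0D[OF assms(1,4,5)] by metis
qed

end
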